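(* Let $k$ be a positive integer and let $a_1,\dots,a_k$ and $b_1,\dots,b_k$ be real numbers in $[a,b]$ such that $\sum_{i=1}^k a_i^j=\sum_{i=1}^k b_i^j$ for all integers $1\le j<k$. Then the following are equivalent: (1) $\sum_{i=1}^k a_i^k\ge\sum_{i=1}^k b_i^k$; (2) $\max_i a_i\ge\max_i b_i$; (3) $\sum_{i=1}^k f(a_i)\ge\sum_{i=1}^k f(b_i)$ for every $k$ times differentiable $f:[a,b]\to\mathbb{R}$ with $f^{(k)}\ge 0$. *)

theory Defs
  imports Complex_Main
begin

definition kdiff_nonneg_on :: "nat \<Rightarrow> real \<Rightarrow> real \<Rightarrow> (real \<Rightarrow> real) \<Rightarrow> bool" where
  "kdiff_nonneg_on k a b f \<longleftrightarrow>
     (\<exists>D :: nat \<Rightarrow> real \<Rightarrow> real.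
        D 0 = f \<and>
        (\<forall>m<k. \<forall>t\<in>{a..b}. (D m has_real_derivative D (Suc m) t) (at t within {a..b})) \<and>
        (\<forall>t\<in>{a..b}. D k t \<ge> 0))"

end

theory Submission
  imports Defs "HOL-Computational_Algebra.Polynomial"
begin

(*
  Let P = prod_i (X - x_i) and Q = prod_i (X - y_i).  By Newton's identities the coefficients
  of degree >= 1 of a monic polynomial are determined by the power sums of its roots of orders
  1, ..., k-1, so Q = P + d for a real constant d, and all three conditions are equivalent
  to d >= 0:
  (1) Evaluating the polynomial Q - X^k (degree < k) at the x_i and at the y_i gives equal
      sums, whence sum x_i^k - sum y_i^k = k d.
  (2) Q(x_i) = d and P(y_i) = -d, and P, Q are positive to the right of all their roots.
  (3) Let p be the Hermite interpolant of f at the y_i (degree < k).  A generalized Rolle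
      theorem shows that divided differences of order k are values of f^(k)/k! >= 0, so
      f >= p wherever the node polynomial Q is >= 0, in particular at the x_i.  Hence
      sum f(x_i) >= sum p(x_i) = sum p(y_i) = sum f(y_i).  Conversely f = t^k is admissible.
*)

abbreviation lin :: "real \<Rightarrow> real poly" where "lin z \<equiv> [:- z, 1:]"

(* The k-th derivative of a polynomial of degree at most k is the constant k! times its
   k-th coefficient; this turns Rolle-type statements into statements about coefficients. *)
lemma poly_higher_pderiv_top:
  fixes q :: "real poly"
  assumes "degree q \<le> k"
  shows "poly ((pderiv ^^ k) q) t = fact k * coeff q k"
proof -
  have "degree ((pderiv ^^ k) q) = 0"
    using assms by (simp add: degree_higher_pderiv)
  then have "poly ((pderiv ^^ k) q) t = poly [:coeff ((pderiv ^^ k) q) 0:] t"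
    by (simp only: degree_0_id)
  then show ?thesis
    by (simp add: coeff_higher_pderiv pochhammer_fact)
qed

lemma poly_higher_pderiv_root_power:
  assumes "s \<le> m"
  shows "poly ((pderiv ^^ s) (lin v ^ m * u)) v = (if s = m then fact m * poly u v else 0)"
  using assms
proof (induction s arbitrary: m u)
  case 0
  then show ?case by (simp add: poly_power)
next
  case (Suc s)
  then obtain n where m: "m = Suc n" by (cases m) auto
  have "pderiv (lin v ^ Suc n) = smult (of_nat (Suc n)) (lin v ^ n)"
    using pderiv_power_Suc[of "lin v" n] by (simp add: pderiv_pCons)
  then have "pderiv (lin v ^ m * u) = lin v ^ n * (smult (of_nat m) u + lin v * pderiv u)"
    unfolding m pderiv_mult
    by (simp add: algebra_simps del: mult_pCons_left mult_pCons_right)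
  then have "(pderiv ^^ Suc s) (lin v ^ m * u)
      = (pderiv ^^ s) (lin v ^ n * (smult (of_nat m) u + lin v * pderiv u))"
    by (simp only: funpow_Suc_right comp_def)
  then show ?case
    using Suc.IH[of n] Suc.prems m by simp
qed

lemma prod_lin_split:
  "(\<Prod>z\<leftarrow>ys. lin z) = lin v ^ count_list ys v * (\<Prod>z\<leftarrow>filter (\<lambda>z. z \<noteq> v) ys. lin z)"
  by (induction ys) (auto simp: algebra_simps)

lemma poly_higher_pderiv_node_poly:
  shows "s < count_list ys v \<Longrightarrow> poly ((pderiv ^^ s) (\<Prod>z\<leftarrow>ys. lin z)) v = 0"
    and "poly ((pderiv ^^ count_list ys v) (\<Prod>z\<leftarrow>ys. lin z)) v \<noteq> 0"
proof -
  have rest: "poly (\<Prod>z\<leftarrow>filter (\<lambda>z. z \<noteq> v) ys. lin z) v \<noteq> 0"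
    by (induction ys) auto
  show "s < count_list ys v \<Longrightarrow> poly ((pderiv ^^ s) (\<Prod>z\<leftarrow>ys. lin z)) v = 0"
    by (subst prod_lin_split[of _ v]) (simp add: poly_higher_pderiv_root_power)
  show "poly ((pderiv ^^ count_list ys v) (\<Prod>z\<leftarrow>ys. lin z)) v \<noteq> 0"
    by (subst prod_lin_split[of _ v]) (simp add: poly_higher_pderiv_root_power rest)
qed

lemma prod_lin_monic:
  "degree (\<Prod>z\<leftarrow>ys. lin z) = length ys \<and> coeff (\<Prod>z\<leftarrow>ys. lin z) (length ys) = 1"
proof (induction ys)
  case Nil
  then show ?case by simp
next
  case (Cons z ys)
  let ?Q = "\<Prod>z\<leftarrow>ys. lin z"
  have "?Q \<noteq> 0" using Cons by auto
  then have "degree (lin z * ?Q) = Suc (length ys)"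
    using Cons by (subst degree_mult_eq) auto
  moreover have "lead_coeff (lin z * ?Q) = 1"
    using Cons by (subst lead_coeff_mult) simp
  ultimately show ?case by simp
qed

definition hermite_interpolates :: "(nat \<Rightarrow> real \<Rightarrow> real) \<Rightarrow> real list \<Rightarrow> real poly \<Rightarrow> bool" where
  "hermite_interpolates D zs p \<longleftrightarrow>
     (\<forall>v s. s < count_list zs v \<longrightarrow> poly ((pderiv ^^ s) p) v = D s v)"

(* Newton form of Hermite interpolation: adding a node w, a suitable multiple of the old node
   polynomial corrects the new condition without disturbing the old ones. *)
lemma hermite_interpolates_Cons:
  assumes p: "hermite_interpolates D ys p"
  obtains c where "hermite_interpolates D (w # ys) (p + smult c (\<Prod>z\<leftarrow>ys. lin z))"
proof
  define Q where "Q = (\<Prod>z\<leftarrow>ys. lin z)"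
  define m where "m = count_list ys w"
  define c where "c = (D m w - poly ((pderiv ^^ m) p) w) / poly ((pderiv ^^ m) Q) w"
  have Qm: "poly ((pderiv ^^ m) Q) w \<noteq> 0"
    unfolding Q_def m_def by (rule poly_higher_pderiv_node_poly(2))
  show "hermite_interpolates D (w # ys) (p + smult c Q)"
    unfolding hermite_interpolates_def
  proof (intro allI impI)
    fix v s assume s: "s < count_list (w # ys) v"
    have split: "poly ((pderiv ^^ s) (p + smult c Q)) v
        = poly ((pderiv ^^ s) p) v + c * poly ((pderiv ^^ s) Q) v"
      by (simp add: higher_pderiv_add higher_pderiv_smult)
    show "poly ((pderiv ^^ s) (p + smult c Q)) v = D s v"
    proof (cases "s < count_list ys v")
      case True
      then show ?thesis
        using split p poly_higher_pderiv_node_poly(1)[OF True]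
        by (simp add: hermite_interpolates_def Q_def)
    next
      case False
      then have "v = w" "s = m"
        using s by (auto simp: m_def split: if_splits)
      then show ?thesis
        using split Qm by (simp add: c_def)
    qed
  qed
qed

lemma hermite_interpolant_exists:
  obtains p where "hermite_interpolates D zs p" and "\<forall>j\<ge>length zs. coeff p j = 0"
proof (induction zs arbitrary: thesis)
  case Nil
  show ?case
    by (rule Nil[of 0]) (simp_all add: hermite_interpolates_def)
next
  case (Cons w ys)
  obtain p where p: "hermite_interpolates D ys p" and deg: "\<forall>j\<ge>length ys. coeff p j = 0"
    using Cons.IH by blast
  obtain c where "hermite_interpolates D (w # ys) (p + smult c (\<Prod>z\<leftarrow>ys. lin z))"
    using hermite_interpolates_Cons[OF p] by blast
  moreover have "\<forall>j\<ge>length (w # ys). coeff (p + smult c (\<Prod>z\<leftarrow>ys. lin z)) j = 0"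
    using deg prod_lin_monic[of ys] by (simp add: coeff_eq_0)
  ultimately show ?case by (rule Cons.prems)
qed

definition deriv_chain :: "(nat \<Rightarrow> real \<Rightarrow> real) \<Rightarrow> nat \<Rightarrow> real \<Rightarrow> real \<Rightarrow> bool" where
  "deriv_chain D n a b \<longleftrightarrow>
     (\<forall>m<n. \<forall>t\<in>{a..b}. (D m has_real_derivative D (Suc m) t) (at t within {a..b}))"

lemma kdiff_nonneg_on_iff_deriv_chain:
  "kdiff_nonneg_on k a b f \<longleftrightarrow>
     (\<exists>D. D 0 = f \<and> deriv_chain D k a b \<and> (\<forall>t\<in>{a..b}. D k t \<ge> 0))"
  by (simp add: kdiff_nonneg_on_def deriv_chain_def)

lemma Rolle_within_interval:
  fixes f :: "real \<Rightarrow> real"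
  assumes der: "\<forall>t\<in>{a..b}. (f has_real_derivative f' t) (at t within {a..b})"
    and uv: "a \<le> u" "u < v" "v \<le> b" and "f u = 0" "f v = 0"
  obtains z where "u < z" "z < v" "f' z = 0"
proof -
  have "continuous_on {a..b} f"
    by (rule DERIV_continuous_on) (use der in blast)
  then have cont: "continuous_on {u..v} f"
    by (rule continuous_on_subset) (use uv in auto)
  have inner: "(f has_real_derivative f' z) (at z)" if "u < z" "z < v" for z
  proof -
    have "at z within {a..b} = at z"
      using that uv by (intro at_within_Icc_at) auto
    then show ?thesis
      using der that uv by (metis atLeastAtMost_iff less_imp_le order.trans)
  qed
  obtain z where z: "u < z" "z < v" "DERIV f z :> 0"
    using Rolle[of u v f] uv \<open>f u = 0\<close> \<open>f v = 0\<close> cont inner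
    by (metis real_differentiable_def)
  then have "f' z = 0"
    using inner[of z] DERIV_unique by blast
  with z show ?thesis using that by blast
qed

(* For a nondecreasing sequence of nodes, rank s i counts the earlier positions carrying the
   same value, i.e. the order of the derivative that must vanish at the i-th node. *)
definition rank :: "(nat \<Rightarrow> real) \<Rightarrow> nat \<Rightarrow> nat" where
  "rank s i = card {j. j < i \<and> s j = s i}"

lemma rank_0 [simp]: "rank s 0 = 0"
  by (simp add: rank_def)

lemma rank_Suc:
  assumes "\<And>j. j \<le> i \<Longrightarrow> s j \<le> s i" and "s i \<le> s (Suc i)"
  shows "rank s (Suc i) = (if s (Suc i) = s i then Suc (rank s i) else 0)"
proof (cases "s (Suc i) = s i")
  case True
  then have "{j. j < Suc i \<and> s j = s (Suc i)} = insert i {j. j < i \<and> s j = s i}"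
    by auto
  then show ?thesis
    using True by (simp add: rank_def)
next
  case False
  have "s j \<noteq> s (Suc i)" if "j \<le> i" for j
    using assms(1)[OF that] assms(2) False by auto
  then have "{j. j < Suc i \<and> s j = s (Suc i)} = {}"
    by (auto simp: less_Suc_eq_le)
  then show ?thesis
    using False by (simp add: rank_def)
qed

lemma mono_upto:
  fixes s :: "nat \<Rightarrow> 'a::preorder"
  assumes "\<forall>i<n. s i \<le> s (Suc i)" and "j \<le> j'" and "j' \<le> n"
  shows "s j \<le> s j'"
  using assms(2,3)
proof (induction j' rule: dec_induct)
  case (step m)
  then have "s j \<le> s m" and "s m \<le> s (Suc m)"
    using assms(1) by simp_all
  then show ?case by (rule order.trans)
qed simp

lemma rank_interlacing:
  assumes mono: "\<forall>i<Suc n. s i \<le> s (Suc i)"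
    and between: "\<forall>i\<le>n. s i \<le> t i \<and> t i \<le> s (Suc i)"
    and stay: "\<forall>i\<le>n. s i = s (Suc i) \<longrightarrow> t i = s i"
    and move: "\<forall>i\<le>n. s i \<noteq> s (Suc i) \<longrightarrow> s i < t i \<and> t i < s (Suc i)"
    and "i \<le> n"
  shows "rank t i = (if s i = s (Suc i) then rank s i else 0)"
  using \<open>i \<le> n\<close>
proof (induction i)
  case 0
  then show ?case by simp
next
  case (Suc i)
  have s_le: "s j \<le> s j'" if "j \<le> j'" "j' \<le> Suc n" for j j'
    using mono_upto[OF mono that] .
  have t_le: "t j \<le> t j'" if "j \<le> j'" "j' \<le> n" for j j'
  proof (cases "j = j'")
    case False
    then have "t j \<le> s (Suc j)" using between that by simp
    also have "\<dots> \<le> s j'" using False that s_le by simp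
    also have "\<dots> \<le> t j'" using between that by simp
    finally show ?thesis .
  qed simp
  have rank_t: "rank t (Suc i) = (if t (Suc i) = t i then Suc (rank t i) else 0)"
    by (rule rank_Suc) (use t_le Suc.prems in simp_all)
  have rank_s: "rank s (Suc i) = (if s (Suc i) = s i then Suc (rank s i) else 0)"
    by (rule rank_Suc) (use s_le Suc.prems in simp_all)
  show ?case
  proof (cases "s (Suc i) = s (Suc (Suc i))")
    case True
    then have t_Suc: "t (Suc i) = s (Suc i)" using stay Suc.prems by simp
    show ?thesis
    proof (cases "s i = s (Suc i)")
      case True
      then have "t i = t (Suc i)" using stay Suc.prems t_Suc by simp
      then show ?thesis
        using True \<open>s (Suc i) = s (Suc (Suc i))\<close> rank_t rank_s Suc.IH Suc.prems t_Suc
        by simp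
    next
      case False
      then have "t i < s (Suc i)" using move Suc.prems by simp
      then have "t i \<noteq> t (Suc i)" using t_Suc by simp
      then show ?thesis
        using False \<open>s (Suc i) = s (Suc (Suc i))\<close> rank_t rank_s t_Suc by simp
    qed
  next
    case False
    then have "t i < t (Suc i)"
      using move between Suc.prems by (meson le_less_trans Suc_leD)
    then show ?thesis
      using False rank_t by simp
  qed
qed

lemma rank_less_count_list:
  assumes "i < length zs"
  shows "rank (nth zs) i < count_list zs (zs ! i)"
proof -
  have "{j. j < i \<and> zs ! j = zs ! i} \<subset> {j. j < length zs \<and> zs ! i = zs ! j}"
    using assms by auto
  then have "card {j. j < i \<and> zs ! j = zs ! i} < card {j. j < length zs \<and> zs ! i = zs ! j}"
    by (rule psubset_card_mono[rotated]) simp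
  then show ?thesis
    by (simp add: rank_def count_list_eq_length_filter length_filter_conv_card)
qed

lemma Rolle_interlacing:
  fixes f f' :: "real \<Rightarrow> real" and s :: "nat \<Rightarrow> real"
  assumes der: "\<forall>t\<in>{a..b}. (f has_real_derivative f' t) (at t within {a..b})"
    and range: "\<forall>i\<le>Suc n. s i \<in> {a..b}" and mono: "\<forall>i<Suc n. s i \<le> s (Suc i)"
    and zeros: "\<forall>i\<le>Suc n. f (s i) = 0"
  obtains t where "\<forall>i\<le>n. s i = s (Suc i) \<longrightarrow> t i = s i"
    and "\<forall>i\<le>n. s i \<noteq> s (Suc i) \<longrightarrow> s i < t i \<and> t i < s (Suc i) \<and> f' (t i) = 0"
proof
  have Rolle_point: "\<exists>z. s i < z \<and> z < s (Suc i) \<and> f' z = 0"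
    if "i \<le> n" "s i \<noteq> s (Suc i)" for i
  proof -
    have "s i < s (Suc i)" using mono that by (simp add: order.strict_iff_order)
    moreover have "a \<le> s i" "s (Suc i) \<le> b" using range that by auto
    moreover have "f (s i) = 0" "f (s (Suc i)) = 0" using zeros that by auto
    ultimately obtain z where "s i < z" "z < s (Suc i)" "f' z = 0"
      using Rolle_within_interval[OF der] by blast
    then show ?thesis by blast
  qed
  define t where
    "t i = (if s i = s (Suc i) then s i else SOME z. s i < z \<and> z < s (Suc i) \<and> f' z = 0)" for i
  show "\<forall>i\<le>n. s i = s (Suc i) \<longrightarrow> t i = s i"
    by (simp add: t_def)
  show "\<forall>i\<le>n. s i \<noteq> s (Suc i) \<longrightarrow> s i < t i \<and> t i < s (Suc i) \<and> f' (t i) = 0"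
    using someI_ex[OF Rolle_point] by (simp add: t_def)
qed

lemma generalized_Rolle:
  assumes "deriv_chain D n a b"
    and "\<forall>i\<le>n. s i \<in> {a..b}" and "\<forall>i<n. s i \<le> s (Suc i)"
    and "\<forall>i\<le>n. \<forall>m\<le>rank s i. D m (s i) = 0"
  shows "\<exists>\<xi>\<in>{a..b}. D n \<xi> = 0"
  using assms
proof (induction n arbitrary: D s)
  case 0
  then have "s 0 \<in> {a..b}" "D 0 (s 0) = 0" by simp_all
  then show ?case by blast
next
  case (Suc n)
  note chain = Suc.prems(1) and range = Suc.prems(2) and mono = Suc.prems(3)
    and zeros = Suc.prems(4)
  have der0: "\<forall>t\<in>{a..b}. (D 0 has_real_derivative D 1 t) (at t within {a..b})"
    using chain by (simp add: deriv_chain_def)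
  obtain t where t_stay: "\<forall>i\<le>n. s i = s (Suc i) \<longrightarrow> t i = s i"
    and t_move: "\<forall>i\<le>n. s i \<noteq> s (Suc i) \<longrightarrow> s i < t i \<and> t i < s (Suc i) \<and> D 1 (t i) = 0"
    using Rolle_interlacing[OF der0 range mono] zeros by blast
  have between: "\<forall>i\<le>n. s i \<le> t i \<and> t i \<le> s (Suc i)"
  proof (intro allI impI)
    fix i assume "i \<le> n"
    then show "s i \<le> t i \<and> t i \<le> s (Suc i)"
      using t_move t_stay by (cases "s i = s (Suc i)") (simp_all add: less_imp_le)
  qed
  have rank_t: "rank t i = (if s i = s (Suc i) then rank s i else 0)" if "i \<le> n" for i
    using t_move by (intro rank_interlacing[OF mono between t_stay _ that]) blast
  have "\<exists>\<xi>\<in>{a..b}. D (Suc n) \<xi> = 0"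
  proof (rule Suc.IH[of "\<lambda>m. D (Suc m)" t])
    show "deriv_chain (\<lambda>m. D (Suc m)) n a b"
      using chain by (simp add: deriv_chain_def)
    show "\<forall>i\<le>n. t i \<in> {a..b}"
    proof (intro allI impI)
      fix i assume "i \<le> n"
      then have "a \<le> s i" "s (Suc i) \<le> b" "s i \<le> t i" "t i \<le> s (Suc i)"
        using range between by auto
      then show "t i \<in> {a..b}" by simp
    qed
    show "\<forall>i<n. t i \<le> t (Suc i)"
    proof (intro allI impI)
      fix i assume "i < n"
      then have "t i \<le> s (Suc i)" "s (Suc i) \<le> t (Suc i)"
        using between by auto
      then show "t i \<le> t (Suc i)" by simp
    qed
    show "\<forall>i\<le>n. \<forall>m\<le>rank t i. D (Suc m) (t i) = 0"
    proof (intro allI impI)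
      fix i m assume i: "i \<le> n" and m: "m \<le> rank t i"
      show "D (Suc m) (t i) = 0"
      proof (cases "s i = s (Suc i)")
        case True
        have "rank s (Suc i) = (if s (Suc i) = s i then Suc (rank s i) else 0)"
          by (rule rank_Suc) (use mono_upto[OF mono] mono i in simp_all)
        then have "rank s (Suc i) = Suc (rank s i)"
          using True by simp
        then have "Suc m \<le> rank s (Suc i)"
          using m rank_t[OF i] True by simp
        then show ?thesis
          using zeros i t_stay True by simp
      next
        case False
        then show ?thesis
          using m rank_t[OF i] t_move i by simp
      qed
    qed
  qed
  then show ?case by simp
qed

lemma generalized_Rolle_list:
  assumes "deriv_chain D n a b" and "sorted zs" "length zs = Suc n" "set zs \<subseteq> {a..b}"
    and "\<forall>v m. m < count_list zs v \<longrightarrow> D m v = 0"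
  shows "\<exists>\<xi>\<in>{a..b}. D n \<xi> = 0"
proof (rule generalized_Rolle[OF assms(1), of "nth zs"])
  show "\<forall>i\<le>n. zs ! i \<in> {a..b}"
  proof (intro allI impI)
    fix i assume "i \<le> n"
    then have "zs ! i \<in> set zs" using assms(3) by simp
    then show "zs ! i \<in> {a..b}" using assms(4) by blast
  qed
  show "\<forall>i<n. zs ! i \<le> zs ! Suc i"
    using assms(2,3) by (simp add: sorted_iff_nth_mono)
  show "\<forall>i\<le>n. \<forall>m\<le>rank (nth zs) i. D m (zs ! i) = 0"
  proof (intro allI impI)
    fix i m assume "i \<le> n" "m \<le> rank (nth zs) i"
    then have "m < count_list zs (zs ! i)"
      using rank_less_count_list[of i zs] assms(3) by simp
    then show "D m (zs ! i) = 0" using assms(5) by blast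
  qed
qed

lemma deriv_chain_poly: "deriv_chain (\<lambda>m. poly ((pderiv ^^ m) p)) n a b"
  unfolding deriv_chain_def
proof (intro allI impI ballI)
  fix m t
  have "(poly ((pderiv ^^ m) p) has_real_derivative poly ((pderiv ^^ Suc m) p) t) (at t)"
    using poly_DERIV[of "(pderiv ^^ m) p" t] by simp
  then show "(poly ((pderiv ^^ m) p) has_real_derivative poly ((pderiv ^^ Suc m) p) t)
      (at t within {a..b})"
    by (rule has_field_derivative_at_within)
qed

lemma deriv_chain_minus_poly:
  assumes "deriv_chain D n a b"
  shows "deriv_chain (\<lambda>m t. D m t - poly ((pderiv ^^ m) p) t) n a b"
  using assms deriv_chain_poly[of p n a b] unfolding deriv_chain_def
  by (auto intro: DERIV_diff)

lemma interpolation_divided_difference: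
  assumes chain: "deriv_chain D k a b"
    and nodes: "length zs = Suc k" "set zs \<subseteq> {a..b}"
    and interp: "hermite_interpolates D zs p" and deg: "degree p \<le> k"
  obtains \<xi> where "\<xi> \<in> {a..b}" "D k \<xi> = fact k * coeff p k"
proof -
  let ?E = "\<lambda>m t. D m t - poly ((pderiv ^^ m) p) t"
  have "count_list (sort zs) v = count_list zs v" for v
    by (simp add: count_list_eq_length_filter filter_sort)
  then have zeros: "\<forall>v m. m < count_list (sort zs) v \<longrightarrow> ?E m v = 0"
    using interp by (simp add: hermite_interpolates_def)
  have "\<exists>\<xi>\<in>{a..b}. ?E k \<xi> = 0"
    by (rule generalized_Rolle_list[OF deriv_chain_minus_poly[OF chain] sorted_sort])
      (use nodes zeros in simp_all)
  then obtain \<xi> where "\<xi> \<in> {a..b}" "?E k \<xi> = 0" by blast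
  moreover have "poly ((pderiv ^^ k) p) \<xi> = fact k * coeff p k"
    using deg by (rule poly_higher_pderiv_top)
  ultimately show ?thesis using that by simp
qed

(* Proof: adding the point t as a node changes p by
   c * (node polynomial), and c is a divided difference of order k, hence nonnegative. *)
lemma interpolation_error_nonneg:
  assumes chain: "deriv_chain D k a b" and pos: "\<forall>t\<in>{a..b}. D k t \<ge> 0"
    and nodes: "length ys = k" "set ys \<subseteq> {a..b}"
    and interp: "hermite_interpolates D ys p" and deg: "\<forall>j\<ge>k. coeff p j = 0"
    and t: "t \<in> {a..b}" and sign: "poly (\<Prod>z\<leftarrow>ys. lin z) t \<ge> 0"
  shows "poly p t \<le> D 0 t"
proof -
  let ?Q = "\<Prod>z\<leftarrow>ys. lin z"
  obtain c where ext: "hermite_interpolates D (t # ys) (p + smult c ?Q)"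
    using hermite_interpolates_Cons[OF interp] by blast
  have Q: "degree ?Q = k" "coeff ?Q k = 1"
    using prod_lin_monic[of ys] nodes by auto
  have "degree p \<le> k"
    using deg by (intro degree_le) auto
  then have "degree (p + smult c ?Q) \<le> k"
    using Q by (intro degree_add_le) auto
  moreover have "coeff (p + smult c ?Q) k = c"
    using deg Q by simp
  ultimately obtain \<xi> where "\<xi> \<in> {a..b}" "D k \<xi> = fact k * c"
    using interpolation_divided_difference[OF chain _ _ ext] nodes t by auto
  then have "0 \<le> fact k * c"
    using pos by metis
  then have "0 \<le> c"
    using fact_gt_zero[of k, where 'a = real] by (simp add: zero_le_mult_iff)
  then have "0 \<le> c * poly ?Q t"
    using sign by simp
  moreover have "poly p t + c * poly ?Q t = D 0 t"
  proof -
    have "0 < count_list (t # ys) t" by simp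
    with ext have "poly ((pderiv ^^ 0) (p + smult c ?Q)) t = D 0 t"
      unfolding hermite_interpolates_def by blast
    then show ?thesis by simp
  qed
  ultimately show ?thesis by linarith
qed

definition root_poly :: "('a \<Rightarrow> real) \<Rightarrow> 'a set \<Rightarrow> real poly" where
  "root_poly x I = (\<Prod>i\<in>I. lin (x i))"

(* The root polynomial is monic of degree card I (also trivially for infinite I). *)
lemma root_poly_monic: "degree (root_poly x I) = card I \<and> coeff (root_poly x I) (card I) = 1"
proof (cases "finite I")
  case True
  have "degree (root_poly x I) = card I"
    unfolding root_poly_def using True by (subst degree_prod_eq_sum_degree) auto
  moreover have "lead_coeff (root_poly x I) = 1"
    unfolding root_poly_def by (simp add: lead_coeff_prod)
  ultimately show ?thesis by simp
qed (simp add: root_poly_def)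

lemma poly_root_poly_root: "finite I \<Longrightarrow> i \<in> I \<Longrightarrow> poly (root_poly x I) (x i) = 0"
  unfolding root_poly_def poly_prod by (rule prod_zero) auto

lemma coeff_quotient_by_lin:
  fixes q :: "real poly"
  assumes "P = lin v * q"
  shows "coeff q n = (\<Sum>m<N. v ^ m * coeff P (n + 1 + m)) + v ^ N * coeff q (n + N)"
proof (induction N)
  case 0
  then show ?case by simp
next
  case (Suc N)
  have "coeff q (n + N) = coeff P (n + 1 + N) + v * coeff q (n + Suc N)"
    using assms by simp
  then show ?case
    using Suc.IH by (simp add: algebra_simps)
qed

lemma newton_identity:
  fixes x :: "'a \<Rightarrow> real"
  assumes "finite I"
  defines "P \<equiv> root_poly x I"
  shows "of_nat (Suc n) * coeff P (Suc n) = (\<Sum>m\<le>card I. coeff P (n + 1 + m) * (\<Sum>i\<in>I. x i ^ m))"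
proof -
  have "of_nat (Suc n) * coeff P (Suc n) = coeff (pderiv P) n"
    by (simp add: coeff_pderiv)
  also have "pderiv P = (\<Sum>i\<in>I. \<Prod>j\<in>I - {i}. lin (x j))"
    unfolding P_def root_poly_def pderiv_prod by (simp add: pderiv_pCons)
  also have "coeff \<dots> n = (\<Sum>i\<in>I. coeff (\<Prod>j\<in>I - {i}. lin (x j)) n)"
    by (rule coeff_sum)
  also have "\<dots> = (\<Sum>i\<in>I. \<Sum>m\<le>card I. x i ^ m * coeff P (n + 1 + m))"
  proof (rule sum.cong[OF refl])
    fix i assume i: "i \<in> I"
    define q where "q = (\<Prod>j\<in>I - {i}. lin (x j))"
    have "P = lin (x i) * q"
      unfolding P_def root_poly_def q_def using i assms(1) by (simp add: prod.remove)
    moreover have "degree q < n + Suc (card I)"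
      using i assms(1) root_poly_monic[of x "I - {i}"] by (simp add: q_def root_poly_def)
    ultimately show "coeff q n = (\<Sum>m\<le>card I. x i ^ m * coeff P (n + 1 + m))"
      using coeff_quotient_by_lin[of P "x i" q n "Suc (card I)"]
      by (simp add: coeff_eq_0 lessThan_Suc_atMost)
  qed
  also have "\<dots> = (\<Sum>m\<le>card I. coeff P (n + 1 + m) * (\<Sum>i\<in>I. x i ^ m))"
    by (subst sum.swap) (simp add: sum_distrib_left mult.commute)
  finally show ?thesis .
qed

lemma newton_recursion_unique:
  fixes cP cQ pX pY :: "nat \<Rightarrow> real"
  assumes recP: "\<And>n. of_nat (Suc n) * cP (Suc n) = (\<Sum>m\<le>k. cP (n + 1 + m) * pX m)"
    and recQ: "\<And>n. of_nat (Suc n) * cQ (Suc n) = (\<Sum>m\<le>k. cQ (n + 1 + m) * pY m)"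
    and above: "\<And>j. k < j \<Longrightarrow> cP j = 0" "\<And>j. k < j \<Longrightarrow> cQ j = 0"
    and top: "cP k = 1" "cQ k = 1"
    and p0: "pX 0 = of_nat k" "pY 0 = of_nat k"
    and power: "\<And>m. 1 \<le> m \<Longrightarrow> m < k \<Longrightarrow> pX m = pY m"
    and "1 \<le> j"
  shows "cP j = cQ j"
proof (cases "j \<le> k")
  case True
  have "\<forall>j'\<ge>j. cP j' = cQ j'"
    using True
  proof (induction j rule: inc_induct)
    case base
    show ?case using above top by (auto simp: le_less)
  next
    case (step n)
    have "1 \<le> n" using step.hyps \<open>1 \<le> j\<close> by simp
    then obtain n' where n: "n = Suc n'" by (cases n) auto
    have tail: "(\<Sum>m<k. cP (n + Suc m) * pX (Suc m)) = (\<Sum>m<k. cQ (n + Suc m) * pY (Suc m))"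
    proof (rule sum.cong[OF refl])
      fix m assume "m \<in> {..<k}"
      show "cP (n + Suc m) * pX (Suc m) = cQ (n + Suc m) * pY (Suc m)"
      proof (cases "k < n + Suc m")
        case True
        then show ?thesis using above by simp
      next
        case False
        then have "pX (Suc m) = pY (Suc m)" using power n by simp
        moreover have "cP (n + Suc m) = cQ (n + Suc m)" using step.IH by simp
        ultimately show ?thesis by simp
      qed
    qed
    have "of_nat n * cP n = cP n * of_nat k + (\<Sum>m<k. cP (n + Suc m) * pX (Suc m))"
      using recP[of n'] p0 n by (simp add: sum.atMost_shift)
    moreover have "of_nat n * cQ n = cQ n * of_nat k + (\<Sum>m<k. cQ (n + Suc m) * pY (Suc m))"
      using recQ[of n'] p0 n by (simp add: sum.atMost_shift)
    ultimately have "(of_nat n - of_nat k) * (cP n - cQ n) = (0::real)"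
      using tail by (simp add: algebra_simps)
    then have "cP n = cQ n"
      using step.hyps by simp
    then show ?case
      using step.IH by (metis Suc_leI le_neq_implies_less)
  qed
  then show ?thesis by simp
qed (use above in simp)

lemma root_polys_differ_by_constant:
  fixes x y :: "'a \<Rightarrow> real"
  assumes fin: "finite I"
    and power: "\<forall>j. 1 \<le> j \<and> j < card I \<longrightarrow> (\<Sum>i\<in>I. x i ^ j) = (\<Sum>i\<in>I. y i ^ j)"
  obtains d where "root_poly y I = root_poly x I + [:d:]"
proof
  let ?P = "root_poly x I" and ?Q = "root_poly y I"
  have coeffs: "coeff ?P j = coeff ?Q j" if "1 \<le> j" for j
  proof (rule newton_recursion_unique[where k = "card I"
        and pX = "\<lambda>m. \<Sum>i\<in>I. x i ^ m" and pY = "\<lambda>m. \<Sum>i\<in>I. y i ^ m"])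
    show "of_nat (Suc n) * coeff ?P (Suc n) = (\<Sum>m\<le>card I. coeff ?P (n + 1 + m) * (\<Sum>i\<in>I. x i ^ m))"
      and "of_nat (Suc n) * coeff ?Q (Suc n) = (\<Sum>m\<le>card I. coeff ?Q (n + 1 + m) * (\<Sum>i\<in>I. y i ^ m))"
      for n using newton_identity[OF fin] by blast+
    show "coeff ?P j' = 0" "coeff ?Q j' = 0" if "card I < j'" for j'
      using that root_poly_monic[of x I] root_poly_monic[of y I] by (simp_all add: coeff_eq_0)
  qed (use root_poly_monic[of x I] root_poly_monic[of y I] power that in simp_all)
  show "?Q = ?P + [:coeff ?Q 0 - coeff ?P 0:]"
    by (rule poly_eqI) (use coeffs in \<open>simp add: coeff_pCons split: nat.split\<close>)
qed

lemma poly_eq_sum_below: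
  fixes R :: "real poly"
  assumes "\<forall>j\<ge>n. coeff R j = 0"
  shows "poly R t = (\<Sum>j<n. coeff R j * t ^ j)"
proof (cases "n = 0")
  case True
  then have "R = 0" using assms by (intro poly_eqI) simp
  then show ?thesis using True by simp
next
  case False
  have "degree R \<le> n - 1" using assms False by (intro degree_le) simp
  then have sub: "{..degree R} \<subseteq> {..<n}" using False by auto
  have "poly R t = (\<Sum>j\<le>degree R. coeff R j * t ^ j)" by (rule poly_altdef)
  also have "\<dots> = (\<Sum>j<n. coeff R j * t ^ j)"
    by (rule sum.mono_neutral_left) (use sub in \<open>auto simp: coeff_eq_0\<close>)
  finally show ?thesis .
qed

lemma sum_poly_eq_of_power_sums_eq:
  fixes x y :: "'a \<Rightarrow> real" and R :: "real poly"
  assumes low: "\<forall>j\<ge>k. coeff R j = 0"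
    and power: "\<forall>j. 1 \<le> j \<and> j < k \<longrightarrow> (\<Sum>i\<in>I. x i ^ j) = (\<Sum>i\<in>I. y i ^ j)"
  shows "(\<Sum>i\<in>I. poly R (x i)) = (\<Sum>i\<in>I. poly R (y i))"
proof -
  have power': "(\<Sum>i\<in>I. x i ^ j) = (\<Sum>i\<in>I. y i ^ j)" if "j < k" for j
    using power that by (cases "j = 0") auto
  have "(\<Sum>i\<in>I. poly R (x i)) = (\<Sum>j<k. coeff R j * (\<Sum>i\<in>I. x i ^ j))"
    unfolding poly_eq_sum_below[OF low] by (subst sum.swap) (simp add: sum_distrib_left)
  also have "\<dots> = (\<Sum>j<k. coeff R j * (\<Sum>i\<in>I. y i ^ j))"
    using power' by simp
  also have "\<dots> = (\<Sum>i\<in>I. poly R (y i))"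
    unfolding poly_eq_sum_below[OF low] by (subst sum.swap) (simp add: sum_distrib_left)
  finally show ?thesis .
qed

lemma power_sum_gap:
  fixes x y :: "'a \<Rightarrow> real"
  assumes fin: "finite I" and shift: "root_poly y I = root_poly x I + [:d:]"
    and power: "\<forall>j. 1 \<le> j \<and> j < card I \<longrightarrow> (\<Sum>i\<in>I. x i ^ j) = (\<Sum>i\<in>I. y i ^ j)"
  shows "(\<Sum>i\<in>I. x i ^ card I) - (\<Sum>i\<in>I. y i ^ card I) = of_nat (card I) * d"
proof -
  define R where "R = root_poly y I - monom 1 (card I)"
  have "\<forall>j\<ge>card I. coeff R j = 0"
    using root_poly_monic[of y I] by (auto simp: R_def coeff_eq_0 coeff_monom)
  then have "(\<Sum>i\<in>I. poly R (x i)) = (\<Sum>i\<in>I. poly R (y i))"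
    using power by (rule sum_poly_eq_of_power_sums_eq)
  moreover have "(\<Sum>i\<in>I. poly R (x i)) = (\<Sum>i\<in>I. d - x i ^ card I)"
    using poly_root_poly_root[OF fin, of _ x] by (simp add: R_def shift poly_monom)
  moreover have "(\<Sum>i\<in>I. poly R (y i)) = (\<Sum>i\<in>I. - (y i ^ card I))"
    using poly_root_poly_root[OF fin, of _ y] by (simp add: R_def poly_monom)
  ultimately show ?thesis
    by (simp add: sum_subtractf sum_negf)
qed

(* Equivalence (2): P and Q are positive to the right of their roots, while Q(max x) = d and
   P(y j) = -d; so max y <= max x iff d >= 0. *)
lemma max_le_iff_shift_nonneg:
  fixes x y :: "'a \<Rightarrow> real"
  assumes fin: "finite I" "I \<noteq> {}" and shift: "root_poly y I = root_poly x I + [:d:]"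
  shows "Max (y ` I) \<le> Max (x ` I) \<longleftrightarrow> 0 \<le> d"
proof
  assume le: "Max (y ` I) \<le> Max (x ` I)"
  have "Max (x ` I) \<in> x ` I"
    using fin by (intro Max_in) auto
  then obtain i where i: "i \<in> I" "x i = Max (x ` I)"
    by force
  have "y j \<le> x i" if "j \<in> I" for j
  proof -
    have "y j \<le> Max (y ` I)" using fin that by simp
    then show ?thesis using le i(2) by simp
  qed
  then have "0 \<le> poly (root_poly y I) (x i)"
    unfolding root_poly_def poly_prod by (intro prod_nonneg) simp
  also have "\<dots> = d"
    using poly_root_poly_root[OF fin(1) i(1)] by (simp add: shift)
  finally show "0 \<le> d" .
next
  assume "0 \<le> d"
  have "y j \<le> Max (x ` I)" if j: "j \<in> I" for j
  proof (rule ccontr)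
    assume "\<not> y j \<le> Max (x ` I)"
    then have "x i < y j" if "i \<in> I" for i
      using that fin by (simp add: Max_ge_iff not_le)
    then have "0 < poly (root_poly x I) (y j)"
      unfolding root_poly_def poly_prod by (intro prod_pos) simp
    also have "poly (root_poly x I) (y j) = - d"
      using poly_root_poly_root[OF fin(1) j, of y] by (simp add: shift)
    finally show False using \<open>0 \<le> d\<close> by simp
  qed
  then show "Max (y ` I) \<le> Max (x ` I)"
    using fin by simp
qed

(* Direction (2) => (3): interpolate f at the y i; the interpolant p has degree below k and
   the node polynomial Q equals d >= 0 at the x i, so sum f(y) = sum p(y) = sum p(x) <= sum f(x). *)
lemma sum_le_of_kdiff_nonneg:
  fixes x y :: "'a \<Rightarrow> real"
  assumes fin: "finite I" and shift: "root_poly y I = root_poly x I + [:d:]" and "0 \<le> d"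
    and power: "\<forall>j. 1 \<le> j \<and> j < card I \<longrightarrow> (\<Sum>i\<in>I. x i ^ j) = (\<Sum>i\<in>I. y i ^ j)"
    and xab: "\<forall>i\<in>I. x i \<in> {a..b}" and yab: "\<forall>i\<in>I. y i \<in> {a..b}"
    and f: "kdiff_nonneg_on (card I) a b f"
  shows "(\<Sum>i\<in>I. f (y i)) \<le> (\<Sum>i\<in>I. f (x i))"
proof -
  obtain D where D0: "D 0 = f" and chain: "deriv_chain D (card I) a b"
    and pos: "\<forall>t\<in>{a..b}. D (card I) t \<ge> 0"
    using f by (auto simp: kdiff_nonneg_on_iff_deriv_chain)
  obtain js where js: "set js = I" "distinct js"
    using finite_distinct_list[OF fin] by blast
  define ys where "ys = map y js"
  have len: "length ys = card I"
    using distinct_card[OF js(2)] js(1) by (simp add: ys_def)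
  have ys_set: "set ys = y ` I" and ysab: "set ys \<subseteq> {a..b}"
    using js yab by (auto simp: ys_def)
  have Q: "root_poly y I = (\<Prod>z\<leftarrow>ys. lin z)"
    unfolding root_poly_def ys_def
    using prod.distinct_set_conv_list[OF js(2), of "\<lambda>i. lin (y i)"] js(1) by (simp add: comp_def)
  obtain p where interp: "hermite_interpolates D ys p" and low: "\<forall>j\<ge>card I. coeff p j = 0"
    using hermite_interpolant_exists[of D ys] len by auto
  have at_y: "poly p (y i) = f (y i)" if "i \<in> I" for i
  proof -
    have "y i \<in> set ys" using that ys_set by simp
    then have "0 < count_list ys (y i)"
      using count_list_0_iff[of ys "y i"] by simp
    then have "poly ((pderiv ^^ 0) p) (y i) = D 0 (y i)"
      using interp unfolding hermite_interpolates_def by blast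
    then show ?thesis using D0 by simp
  qed
  have at_x: "poly p (x i) \<le> f (x i)" if "i \<in> I" for i
  proof -
    have "poly (\<Prod>z\<leftarrow>ys. lin z) (x i) = d"
      using poly_root_poly_root[OF fin that, of x] by (simp add: Q[symmetric] shift)
    then show ?thesis
      using interpolation_error_nonneg[OF chain pos len ysab interp low] xab that D0 \<open>0 \<le> d\<close>
      by simp
  qed
  have "(\<Sum>i\<in>I. f (y i)) = (\<Sum>i\<in>I. poly p (y i))"
    using at_y by simp
  also have "\<dots> = (\<Sum>i\<in>I. poly p (x i))"
    using sum_poly_eq_of_power_sums_eq[OF low power] by simp
  also have "\<dots> \<le> (\<Sum>i\<in>I. f (x i))"
    using at_x by (rule sum_mono)
  finally show ?thesis .
qed

lemma power_kdiff_nonneg_on: "kdiff_nonneg_on k a b (\<lambda>t. t ^ k)"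
  unfolding kdiff_nonneg_on_iff_deriv_chain
proof (intro exI conjI)
  let ?p = "monom (1::real) k"
  show "(\<lambda>m. poly ((pderiv ^^ m) ?p)) 0 = (\<lambda>t. t ^ k)"
    by (rule ext) (simp add: poly_monom)
  show "deriv_chain (\<lambda>m. poly ((pderiv ^^ m) ?p)) k a b"
    by (rule deriv_chain_poly)
  show "\<forall>t\<in>{a..b}. 0 \<le> poly ((pderiv ^^ k) ?p) t"
    using poly_higher_pderiv_top[of ?p k] by (simp add: degree_monom_le)
qed

theorem mainTheorem6:
  fixes k :: nat and a b :: real and x y :: "nat \<Rightarrow> real"
  assumes "k \<ge> 1"
    and "\<forall>i\<in>{1..k}. x i \<in> {a..b}"
    and "\<forall>i\<in>{1..k}. y i \<in> {a..b}"
    and "\<forall>j. 1 \<le> j \<and> j < k \<longrightarrow> (\<Sum>i=1..k. x i ^ j) = (\<Sum>i=1..k. y i ^ j)"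
  shows "((\<Sum>i=1..k. x i ^ k) \<ge> (\<Sum>i=1..k. y i ^ k) \<longleftrightarrow> Max (x ` {1..k}) \<ge> Max (y ` {1..k}))
       \<and> (Max (x ` {1..k}) \<ge> Max (y ` {1..k}) \<longleftrightarrow>
           (\<forall>f. kdiff_nonneg_on k a b f \<longrightarrow> (\<Sum>i=1..k. f (x i)) \<ge> (\<Sum>i=1..k. f (y i))))"
proof -
  let ?I = "{1..k}"
  have fin: "finite ?I" "?I \<noteq> {}" and card: "card ?I = k"
    using assms(1) by auto
  have power: "\<forall>j. 1 \<le> j \<and> j < card ?I \<longrightarrow> (\<Sum>i\<in>?I. x i ^ j) = (\<Sum>i\<in>?I. y i ^ j)"
    using assms(4) card by simp
  obtain d where shift: "root_poly y ?I = root_poly x ?I + [:d:]"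
    using root_polys_differ_by_constant[OF fin(1) power] by blast
  have "(\<Sum>i\<in>?I. x i ^ k) - (\<Sum>i\<in>?I. y i ^ k) = of_nat k * d"
    using power_sum_gap[OF fin(1) shift power] card by simp
  then have "(\<Sum>i\<in>?I. x i ^ k) \<ge> (\<Sum>i\<in>?I. y i ^ k) \<longleftrightarrow> 0 \<le> of_nat k * d"
    by linarith
  also have "\<dots> \<longleftrightarrow> 0 \<le> d"
    using assms(1) by (simp add: zero_le_mult_iff)
  finally have sums: "(\<Sum>i\<in>?I. x i ^ k) \<ge> (\<Sum>i\<in>?I. y i ^ k) \<longleftrightarrow> 0 \<le> d" .
  have maxima: "Max (y ` ?I) \<le> Max (x ` ?I) \<longleftrightarrow> 0 \<le> d"
    using max_le_iff_shift_nonneg[OF fin shift] .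
  have "(\<Sum>i\<in>?I. f (y i)) \<le> (\<Sum>i\<in>?I. f (x i))" if "0 \<le> d" "kdiff_nonneg_on k a b f" for f
    using sum_le_of_kdiff_nonneg[OF fin(1) shift that(1) power] assms(2,3) that(2) card by simp
  moreover have "kdiff_nonneg_on k a b (\<lambda>t. t ^ k)"
    by (rule power_kdiff_nonneg_on)
  ultimately show ?thesis
    using sums maxima by blast
qed

end
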